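(* Let $\mathscr G=(\mathscr V,\mathscr E)$ be a finite connected graph with $N$ vertices and $M\ge0$ an integer. The unique stationary distribution $\pi_X$ of the uniform reshuffling model on $\mathscr C_{N,M}$ is the uniform distribution on $\mathscr C_{N,M}$.
   Context: $\mathscr C_{N,M}$ is the set of maps $\xi:\mathscr V\to\mathbb N$ with $\sum_x\xi(x)=M$. The uniform reshuffling model is the discrete-time Markov chain on $\mathscr C_{N,M}$: at each step an edge $(x,y)\in\mathscr E$ is chosen uniformly at random, $U$ is drawn uniformly from $\{0,1,\dots,X_t(x)+X_t(y)\}$, and $X_{t+1}(x)=U$, $X_{t+1}(y)=X_t(x)+X_t(y)-U$, $X_{t+1}(z)=X_t(z)$ for $z\notin\{x,y\}$. This chain has a unique stationary distribution, denoted $\pi_X$. *)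

theory Defs
  imports Complex_Main
begin

text \<open>A finite simple graph on vertex set V with edges E given as a symmetric,
  irreflexive set of ordered pairs (each undirected edge appears in both orientations).\<close>
definition simple_graph :: "'a set \<Rightarrow> ('a \<times> 'a) set \<Rightarrow> bool" where
  "simple_graph V E \<longleftrightarrow> finite V \<and> E \<subseteq> V \<times> V \<and> sym E \<and> (\<forall>x. (x, x) \<notin> E)"

definition connected_graph :: "'a set \<Rightarrow> ('a \<times> 'a) set \<Rightarrow> bool" where
  "connected_graph V E \<longleftrightarrow> V \<noteq> {} \<and> (\<forall>x\<in>V. \<forall>y\<in>V. (x, y) \<in> E\<^sup>*)"

definition configs :: "'a set \<Rightarrow> nat \<Rightarrow> ('a \<Rightarrow> nat) set" where
  "configs V M = {\<xi>. (\<forall>x. x \<notin> V \<longrightarrow> \<xi> x = 0) \<and> (\<Sum>x\<in>V. \<xi> x) = M}"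

text \<open>One-step transition probability of the uniform reshuffling model from \<xi> to \<eta>:
  choose (x,y) in E uniformly, U uniform in {0..\<xi> x + \<xi> y}, set x to U and y to the rest.\<close>
definition reshuffle_step :: "('a \<times> 'a) set \<Rightarrow> ('a \<Rightarrow> nat) \<Rightarrow> ('a \<Rightarrow> nat) \<Rightarrow> real" where
  "reshuffle_step E \<xi> \<eta> =
     (if E = {} then (if \<eta> = \<xi> then 1 else 0) else (
     \<Sum>(x, y)\<in>E. (1 / real (card E)) *
        (\<Sum>u\<in>{0..\<xi> x + \<xi> y}. (1 / real (\<xi> x + \<xi> y + 1)) *
           (if \<eta> = \<xi>(x := u, y := \<xi> x + \<xi> y - u) then 1 else 0))))"

definition stationary_dist :: "'a set \<Rightarrow> ('a \<times> 'a) set \<Rightarrow> nat \<Rightarrow> (('a \<Rightarrow> nat) \<Rightarrow> real) \<Rightarrow> bool" where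
  "stationary_dist V E M p \<longleftrightarrow>
     (\<forall>\<xi>\<in>configs V M. p \<xi> \<ge> 0) \<and> (\<Sum>\<xi>\<in>configs V M. p \<xi>) = 1 \<and>
     (\<forall>\<eta>\<in>configs V M. (\<Sum>\<xi>\<in>configs V M. p \<xi> * reshuffle_step E \<xi> \<eta>) = p \<eta>)"

end

theory Submission
  imports Defs
begin

text \<open>Updating an edge \<open>(x, y)\<close> resamples the split of \<open>s = \<xi> x + \<xi> y\<close> uniformly among its
  \<open>s + 1\<close> possibilities, so \<open>\<eta>\<close> arises from \<open>\<xi>\<close> with the same probability \<open>1 / (s + 1)\<close> as \<open>\<xi>\<close> from
  \<open>\<eta>\<close>. The transition matrix is therefore symmetric, hence doubly stochastic, and the uniform
  distribution is stationary. For uniqueness, a stationary \<open>p\<close> at a maximiser is an average of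
  its values at the predecessors, so the set of maximisers is closed under transitions. Since
  the graph is connected, mass can be moved unit by unit to a fixed vertex and back, so all
  configurations communicate and \<open>p\<close> is constant.\<close>

definition positive_transitions :: "'s set \<Rightarrow> ('s \<Rightarrow> 's \<Rightarrow> real) \<Rightarrow> ('s \<times> 's) set" where
  "positive_transitions S P = {(\<xi>, \<eta>). \<xi> \<in> S \<and> \<eta> \<in> S \<and> 0 < P \<xi> \<eta>}"

lemma uniform_stationary_if_column_stochastic:
  assumes "\<eta> \<in> S" and "(\<Sum>\<xi>\<in>S. P \<xi> \<eta>) = 1"
  shows "(\<Sum>\<xi>\<in>S. 1 / real (card S) * P \<xi> \<eta>) = 1 / real (card S)"
  using assms by (simp add: sum_divide_distrib[symmetric])

text \<open>Maximum principle: at a maximiser \<open>\<eta>\<close>, \<open>p \<eta>\<close> is a convex combination of values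
  \<open>p \<xi> \<le> p \<eta>\<close>, so every \<open>\<xi>\<close> with \<open>P \<xi> \<eta> > 0\<close> must be a maximiser as well.\<close>
lemma stationary_Max_backward:
  assumes S: "finite S"
    and nonneg: "\<And>\<xi> \<eta>. 0 \<le> P \<xi> \<eta>"
    and col: "\<forall>\<eta>\<in>S. (\<Sum>\<xi>\<in>S. P \<xi> \<eta>) = 1"
    and stat: "\<forall>\<eta>\<in>S. (\<Sum>\<xi>\<in>S. p \<xi> * P \<xi> \<eta>) = p \<eta>"
    and step: "(\<xi>, \<eta>) \<in> positive_transitions S P"
    and max: "p \<eta> = Max (p ` S)"
  shows "p \<xi> = Max (p ` S)"
proof (rule ccontr)
  let ?m = "Max (p ` S)"
  have le: "p \<zeta> \<le> ?m" if "\<zeta> \<in> S" for \<zeta> using S that by simp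
  from step have \<xi>: "\<xi> \<in> S" and \<eta>: "\<eta> \<in> S" and pos: "0 < P \<xi> \<eta>"
    by (auto simp: positive_transitions_def)
  assume "p \<xi> \<noteq> ?m"
  with le[OF \<xi>] have lt: "p \<xi> < ?m" by simp
  have "p \<eta> = (\<Sum>\<zeta>\<in>S. p \<zeta> * P \<zeta> \<eta>)" using stat \<eta> by simp
  also have "\<dots> < (\<Sum>\<zeta>\<in>S. ?m * P \<zeta> \<eta>)"
  proof (rule sum_strict_mono_ex1[OF S])
    show "\<forall>\<zeta>\<in>S. p \<zeta> * P \<zeta> \<eta> \<le> ?m * P \<zeta> \<eta>"
      using le nonneg by (simp add: mult_right_mono)
    show "\<exists>\<zeta>\<in>S. p \<zeta> * P \<zeta> \<eta> < ?m * P \<zeta> \<eta>"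
      using \<xi> mult_strict_right_mono[OF lt pos] by blast
  qed
  also have "\<dots> = ?m" using col \<eta> by (simp add: sum_distrib_left[symmetric])
  finally show False using max by simp
qed

lemma stationary_Max_backward_rtrancl:
  assumes "finite S" "\<And>\<xi> \<eta>. 0 \<le> P \<xi> \<eta>"
    and "\<forall>\<eta>\<in>S. (\<Sum>\<xi>\<in>S. P \<xi> \<eta>) = 1"
    and "\<forall>\<eta>\<in>S. (\<Sum>\<xi>\<in>S. p \<xi> * P \<xi> \<eta>) = p \<eta>"
    and "(\<xi>, \<eta>) \<in> (positive_transitions S P)\<^sup>*"
    and "p \<eta> = Max (p ` S)"
  shows "p \<xi> = Max (p ` S)"
  using assms(5,6)
  by (induction rule: converse_rtrancl_induct) (use stationary_Max_backward[OF assms(1-4)] in blast)+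

lemma sym_positive_transitions:
  assumes "\<And>\<xi> \<eta>. P \<xi> \<eta> = P \<eta> \<xi>"
  shows "sym (positive_transitions S P)"
  using assms by (auto simp: sym_def positive_transitions_def)

lemma stationary_uniform_if_irreducible:
  assumes S: "finite S"
    and nonneg: "\<And>\<xi> \<eta>. 0 \<le> P \<xi> \<eta>"
    and symm: "\<And>\<xi> \<eta>. P \<xi> \<eta> = P \<eta> \<xi>"
    and col: "\<forall>\<eta>\<in>S. (\<Sum>\<xi>\<in>S. P \<xi> \<eta>) = 1"
    and stat: "\<forall>\<eta>\<in>S. (\<Sum>\<xi>\<in>S. p \<xi> * P \<xi> \<eta>) = p \<eta>"
    and total: "(\<Sum>\<xi>\<in>S. p \<xi>) = 1"
    and hub: "h \<in> S" "\<forall>\<xi>\<in>S. (\<xi>, h) \<in> (positive_transitions S P)\<^sup>*"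
  shows "\<forall>\<xi>\<in>S. p \<xi> = 1 / real (card S)"
proof -
  let ?R = "positive_transitions S P"
  define m where "m = Max (p ` S)"
  note backward = stationary_Max_backward_rtrancl[OF S nonneg col stat, folded m_def]
  obtain \<xi>\<^sub>0 where \<xi>\<^sub>0: "\<xi>\<^sub>0 \<in> S" "p \<xi>\<^sub>0 = m"
    using Max_in[of "p ` S"] S hub(1) unfolding m_def by fastforce
  have "(h, \<xi>\<^sub>0) \<in> ?R\<^sup>*"
    using hub \<xi>\<^sub>0(1) sym_rtrancl[OF sym_positive_transitions[of P S, OF symm]] by (auto dest: symD)
  then have "p h = m" using backward \<xi>\<^sub>0(2) by blast
  then have const: "\<forall>\<xi>\<in>S. p \<xi> = m" using backward hub(2) by blast
  then have "real (card S) * m = 1" using total by simp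
  then show ?thesis using const by (auto simp: eq_divide_eq mult.commute)
qed

definition edge_reshuffle :: "'a \<Rightarrow> 'a \<Rightarrow> ('a \<Rightarrow> nat) \<Rightarrow> ('a \<Rightarrow> nat) \<Rightarrow> real" where
  "edge_reshuffle x y \<xi> \<eta> =
     (\<Sum>u\<in>{0..\<xi> x + \<xi> y}. (1 / real (\<xi> x + \<xi> y + 1)) *
        (if \<eta> = \<xi>(x := u, y := \<xi> x + \<xi> y - u) then 1 else 0))"

lemma reshuffle_step_eq_mean:
  assumes "E \<noteq> {}"
  shows "reshuffle_step E \<xi> \<eta> = (\<Sum>(x, y)\<in>E. edge_reshuffle x y \<xi> \<eta>) / real (card E)"
  using assms
  by (simp add: reshuffle_step_def edge_reshuffle_def sum_divide_distrib case_prod_beta)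

lemma edge_reshuffle_eq:
  assumes "x \<noteq> y"
  shows "edge_reshuffle x y \<xi> \<eta> =
    (if (\<forall>z. z \<noteq> x \<longrightarrow> z \<noteq> y \<longrightarrow> \<eta> z = \<xi> z) \<and> \<eta> x + \<eta> y = \<xi> x + \<xi> y
     then 1 / real (\<xi> x + \<xi> y + 1) else 0)" (is "_ = (if ?c then _ else _)")
proof -
  let ?s = "\<xi> x + \<xi> y"
  have hit: "(\<eta> = \<xi>(x := u, y := ?s - u)) \<longleftrightarrow> u = \<eta> x \<and> ?c" if "u \<le> ?s" for u
  proof
    assume "\<eta> = \<xi>(x := u, y := ?s - u)"
    then show "u = \<eta> x \<and> ?c" using assms that by auto
  qed (use assms in \<open>auto simp: fun_eq_iff\<close>)
  have "edge_reshuffle x y \<xi> \<eta> = (\<Sum>u\<in>{0..?s}. if u = \<eta> x then (if ?c then 1 / real (?s + 1) else 0) else 0)"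
    unfolding edge_reshuffle_def by (rule sum.cong) (auto simp: hit)
  then show ?thesis by auto
qed

lemma edge_reshuffle_commute:
  "x \<noteq> y \<Longrightarrow> edge_reshuffle x y \<xi> \<eta> = edge_reshuffle x y \<eta> \<xi>"
  by (auto simp: edge_reshuffle_eq)

lemma edge_reshuffle_nonneg: "0 \<le> edge_reshuffle x y \<xi> \<eta>"
  by (simp add: edge_reshuffle_def sum_nonneg)

lemma reshuffle_step_nonneg: "0 \<le> reshuffle_step E \<xi> \<eta>"
  by (cases "E = {}")
    (simp_all add: reshuffle_step_def reshuffle_step_eq_mean edge_reshuffle_nonneg sum_nonneg case_prod_beta)

lemma reshuffle_step_commute:
  assumes "simple_graph V E"
  shows "reshuffle_step E \<xi> \<eta> = reshuffle_step E \<eta> \<xi>"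
proof (cases "E = {}")
  case False
  have "x \<noteq> y" if "(x, y) \<in> E" for x y using assms that by (auto simp: simple_graph_def)
  then show ?thesis using False
    by (simp add: reshuffle_step_eq_mean edge_reshuffle_commute case_prod_beta cong: sum.cong)
qed (auto simp: reshuffle_step_def)

lemma finite_configs:
  assumes "finite V" shows "finite (configs V M)"
proof -
  have "configs V M \<subseteq> {f. \<forall>x. (x \<in> V \<longrightarrow> f x \<in> {0..M}) \<and> (x \<notin> V \<longrightarrow> f x = 0)}"
    using member_le_sum[of _ V] assms by (fastforce simp: configs_def)
  then show ?thesis using finite_subset finite_set_of_finite_funs[OF assms, of "{0..M}" 0] by blast
qed

lemma configs_fun_upd:
  assumes "\<xi> \<in> configs V M" "finite V" "x \<in> V" "y \<in> V" "x \<noteq> y" "a + b = \<xi> x + \<xi> y"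
  shows "\<xi>(x := a, y := b) \<in> configs V M"
proof -
  have split: "sum f V = f x + f y + sum f (V - {x} - {y})" for f :: "'a \<Rightarrow> nat"
    using assms(2-5) sum.remove[of V x f] sum.remove[of "V - {x}" y f] by (simp add: add.assoc)
  have "sum (\<xi>(x := a, y := b)) (V - {x} - {y}) = sum \<xi> (V - {x} - {y})"
    by (rule sum.cong) auto
  then have "sum (\<xi>(x := a, y := b)) V = sum \<xi> V"
    using split[of \<xi>] split[of "\<xi>(x := a, y := b)"] assms(5,6) by simp
  then show ?thesis using assms(1,3,4) by (auto simp: configs_def)
qed

lemma sum_edge_reshuffle_configs:
  assumes "\<xi> \<in> configs V M" "finite V" "x \<in> V" "y \<in> V" "x \<noteq> y"
  shows "(\<Sum>\<eta>\<in>configs V M. edge_reshuffle x y \<xi> \<eta>) = 1"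
proof -
  let ?C = "configs V M" and ?s = "\<xi> x + \<xi> y"
  let ?c = "1 / real (?s + 1)" and ?f = "\<lambda>u. \<xi>(x := u, y := ?s - u)"
  have "(\<Sum>\<eta>\<in>?C. edge_reshuffle x y \<xi> \<eta>) = (\<Sum>u\<in>{0..?s}. \<Sum>\<eta>\<in>?C. ?c * (if \<eta> = ?f u then 1 else 0))"
    unfolding edge_reshuffle_def by (rule sum.swap)
  also have "\<dots> = (\<Sum>u\<in>{0..?s}. ?c)"
  proof (rule sum.cong)
    fix u assume "u \<in> {0..?s}"
    then have "?f u \<in> ?C" using configs_fun_upd[OF assms] by simp
    then show "(\<Sum>\<eta>\<in>?C. ?c * (if \<eta> = ?f u then 1 else 0)) = ?c"
      using finite_configs[OF assms(2)] by (simp add: if_distrib cong: if_cong)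
  qed simp
  finally show ?thesis by simp
qed

lemma reshuffle_step_row_sum:
  assumes sg: "simple_graph V E" and \<xi>: "\<xi> \<in> configs V M"
  shows "(\<Sum>\<eta>\<in>configs V M. reshuffle_step E \<xi> \<eta>) = 1"
proof (cases "E = {}")
  case True
  then show ?thesis using \<xi> finite_configs[of V M] sg by (simp add: reshuffle_step_def simple_graph_def)
next
  case False
  have fV: "finite V" and fE: "finite E" using sg finite_subset[of E "V \<times> V"]
    by (auto simp: simple_graph_def)
  have edge: "(\<Sum>\<eta>\<in>configs V M. edge_reshuffle x y \<xi> \<eta>) = 1" if "(x, y) \<in> E" for x y
    using sg that sum_edge_reshuffle_configs[OF \<xi> fV] by (auto simp: simple_graph_def)
  have "(\<Sum>\<eta>\<in>configs V M. reshuffle_step E \<xi> \<eta>)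
      = (\<Sum>\<eta>\<in>configs V M. \<Sum>(x, y)\<in>E. edge_reshuffle x y \<xi> \<eta>) / real (card E)"
    using False by (simp add: reshuffle_step_eq_mean sum_divide_distrib[symmetric])
  also have "\<dots> = (\<Sum>(x, y)\<in>E. \<Sum>\<eta>\<in>configs V M. edge_reshuffle x y \<xi> \<eta>) / real (card E)"
    by (subst sum.swap) (simp add: case_prod_beta)
  also have "\<dots> = 1" using edge False fE by (simp add: case_prod_beta)
  finally show ?thesis .
qed

lemma reshuffle_step_column_sum:
  assumes "simple_graph V E" "\<eta> \<in> configs V M"
  shows "(\<Sum>\<xi>\<in>configs V M. reshuffle_step E \<xi> \<eta>) = 1"
  using reshuffle_step_row_sum[OF assms] reshuffle_step_commute[OF assms(1)] by simp

text \<open>Meant for \<open>0 < \<xi> a\<close>; the pointwise form makes \<open>move_unit \<xi> a a = \<xi>\<close> and lets moves compose.\<close>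
definition move_unit :: "('a \<Rightarrow> nat) \<Rightarrow> 'a \<Rightarrow> 'a \<Rightarrow> 'a \<Rightarrow> nat" where
  "move_unit \<xi> a b = (\<lambda>z. \<xi> z - of_bool (z = a) + of_bool (z = b))"

lemma move_unit_fun_upd: "a \<noteq> b \<Longrightarrow> move_unit \<xi> a b = \<xi>(a := \<xi> a - 1, b := \<xi> b + 1)"
  by (auto simp: move_unit_def)

lemma move_unit_self: "0 < \<xi> a \<Longrightarrow> move_unit \<xi> a a = \<xi>"
  by (auto simp: move_unit_def)

lemma move_unit_move_unit: "move_unit (move_unit \<xi> a c) c b = move_unit \<xi> a b"
  by (auto simp: move_unit_def)

lemma move_unit_in_configs:
  assumes "\<xi> \<in> configs V M" "finite V" "a \<in> V" "b \<in> V" "0 < \<xi> a"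
  shows "move_unit \<xi> a b \<in> configs V M"
  using assms configs_fun_upd[OF assms(1-4)] by (cases "a = b") (simp_all add: move_unit_self move_unit_fun_upd)

lemma move_unit_positive_transition:
  assumes sg: "simple_graph V E" and \<xi>: "\<xi> \<in> configs V M" and ac: "(a, c) \<in> E" and pos: "0 < \<xi> a"
  shows "(\<xi>, move_unit \<xi> a c) \<in> positive_transitions (configs V M) (reshuffle_step E)"
proof -
  have fV: "finite V" and fE: "finite E" and V: "a \<in> V" "c \<in> V" and "a \<noteq> c"
    using sg ac finite_subset[of E "V \<times> V"] by (auto simp: simple_graph_def)
  have "0 < edge_reshuffle a c \<xi> (move_unit \<xi> a c)"
    using \<open>a \<noteq> c\<close> pos by (simp add: edge_reshuffle_eq move_unit_fun_upd)
  then have "0 < (\<Sum>(x, y)\<in>E. edge_reshuffle x y \<xi> (move_unit \<xi> a c))"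
    using sum_pos2[OF fE ac, of "\<lambda>(x, y). edge_reshuffle x y \<xi> (move_unit \<xi> a c)"]
    by (simp add: case_prod_beta edge_reshuffle_nonneg)
  moreover have "0 < real (card E)" using ac fE card_gt_0_iff by auto
  moreover have "E \<noteq> {}" using ac by auto
  ultimately have "0 < reshuffle_step E \<xi> (move_unit \<xi> a c)"
    by (simp add: reshuffle_step_eq_mean)
  then show ?thesis
    using move_unit_in_configs[OF \<xi> fV V pos] \<xi> by (simp add: positive_transitions_def)
qed

lemma move_unit_along_path:
  assumes sg: "simple_graph V E" and path: "(a, b) \<in> E\<^sup>*"
  shows "\<xi> \<in> configs V M \<Longrightarrow> 0 < \<xi> a
    \<Longrightarrow> (\<xi>, move_unit \<xi> a b) \<in> (positive_transitions (configs V M) (reshuffle_step E))\<^sup>*"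
  using path
proof (induction arbitrary: \<xi> rule: converse_rtrancl_induct)
  case base
  then show ?case by (simp add: move_unit_self)
next
  case (step a c)
  have "a \<noteq> c" using step.hyps(1) sg by (auto simp: simple_graph_def)
  let ?\<xi>' = "move_unit \<xi> a c"
  have first: "(\<xi>, ?\<xi>') \<in> positive_transitions (configs V M) (reshuffle_step E)"
    using move_unit_positive_transition[OF sg step.prems(1) step.hyps(1) step.prems(2)] .
  then have "?\<xi>' \<in> configs V M" by (simp add: positive_transitions_def)
  moreover have "0 < ?\<xi>' c" using \<open>a \<noteq> c\<close> by (simp add: move_unit_def)
  ultimately have "(?\<xi>', move_unit ?\<xi>' c b) \<in> (positive_transitions (configs V M) (reshuffle_step E))\<^sup>*"
    by (rule step.IH)
  then show ?case using first by (simp add: move_unit_move_unit)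
qed

text \<open>The induction measure \<open>M - \<xi> v\<^sub>0\<close> is the mass outside \<open>v\<^sub>0\<close>.\<close>
lemma reaches_point_mass:
  assumes sg: "simple_graph V E" and cg: "connected_graph V E" and v\<^sub>0: "v\<^sub>0 \<in> V"
  shows "\<xi> \<in> configs V M \<Longrightarrow>
    (\<xi>, \<lambda>z. if z = v\<^sub>0 then M else 0) \<in> (positive_transitions (configs V M) (reshuffle_step E))\<^sup>*"
proof (induction "M - \<xi> v\<^sub>0" arbitrary: \<xi> rule: less_induct)
  case less
  have fV: "finite V" using sg by (simp add: simple_graph_def)
  have outside: "\<xi> z = 0" if "z \<notin> V" for z using less.prems that by (simp add: configs_def)
  show ?case
  proof (cases "\<exists>a. a \<noteq> v\<^sub>0 \<and> 0 < \<xi> a")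
    case False
    have "(\<Sum>z\<in>V. \<xi> z) = (\<Sum>z\<in>V. if z = v\<^sub>0 then \<xi> v\<^sub>0 else 0)"
      by (rule sum.cong) (use False in auto)
    then have "(\<Sum>z\<in>V. \<xi> z) = \<xi> v\<^sub>0" using fV v\<^sub>0 by simp
    then have "\<xi> = (\<lambda>z. if z = v\<^sub>0 then M else 0)"
      using False less.prems by (auto simp: configs_def fun_eq_iff)
    then show ?thesis by simp
  next
    case True
    then obtain a where a: "a \<noteq> v\<^sub>0" "0 < \<xi> a" by blast
    then have aV: "a \<in> V" using outside by (metis less_irrefl)
    have "sum \<xi> {a, v\<^sub>0} \<le> sum \<xi> V" by (rule sum_mono2) (use fV aV v\<^sub>0 in auto)
    then have "\<xi> a + \<xi> v\<^sub>0 \<le> M" using less.prems a(1) by (simp add: configs_def)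
    then have "M - move_unit \<xi> a v\<^sub>0 v\<^sub>0 < M - \<xi> v\<^sub>0" using a by (simp add: move_unit_def)
    moreover have "move_unit \<xi> a v\<^sub>0 \<in> configs V M"
      using move_unit_in_configs[OF less.prems fV aV v\<^sub>0 a(2)] .
    moreover have "(a, v\<^sub>0) \<in> E\<^sup>*" using cg aV v\<^sub>0 by (simp add: connected_graph_def)
    ultimately show ?thesis
      using less.hyps move_unit_along_path[OF sg _ less.prems a(2)] rtrancl_trans by metis
  qed
qed

theorem lemma2:
  fixes V :: "'a set" and E :: "('a \<times> 'a) set" and M :: nat
  assumes "simple_graph V E" and "connected_graph V E"
  shows "stationary_dist V E M (\<lambda>\<xi>. 1 / real (card (configs V M)))
    \<and> (\<forall>p. stationary_dist V E M p \<longrightarrow> (\<forall>\<xi>\<in>configs V M. p \<xi> = 1 / real (card (configs V M))))"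
proof -
  let ?C = "configs V M"
  have fC: "finite ?C" using assms(1) finite_configs by (auto simp: simple_graph_def)
  obtain v\<^sub>0 where v\<^sub>0: "v\<^sub>0 \<in> V" using assms(2) by (auto simp: connected_graph_def)
  let ?\<delta> = "\<lambda>z. if z = v\<^sub>0 then M else 0"
  have \<delta>: "?\<delta> \<in> ?C" using v\<^sub>0 assms(1) by (auto simp: configs_def simple_graph_def)
  note col = reshuffle_step_column_sum[OF assms(1)]
  have "(\<Sum>\<xi>\<in>?C. 1 / real (card ?C) * reshuffle_step E \<xi> \<eta>) = 1 / real (card ?C)"
    if "\<eta> \<in> ?C" for \<eta>
    using uniform_stationary_if_column_stochastic[of \<eta> ?C "reshuffle_step E"] that col[OF that] by blast
  then have "stationary_dist V E M (\<lambda>\<xi>. 1 / real (card ?C))"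
    using fC \<delta> by (auto simp: stationary_dist_def card_gt_0_iff)
  moreover have "\<forall>\<xi>\<in>?C. p \<xi> = 1 / real (card ?C)" if "stationary_dist V E M p" for p
  proof (rule stationary_uniform_if_irreducible[where P = "reshuffle_step E"])
    show "\<forall>\<eta>\<in>?C. (\<Sum>\<xi>\<in>?C. p \<xi> * reshuffle_step E \<xi> \<eta>) = p \<eta>" "(\<Sum>\<xi>\<in>?C. p \<xi>) = 1"
      using that by (simp_all add: stationary_dist_def)
  qed (use fC \<delta> col reaches_point_mass[OF assms v\<^sub>0] reshuffle_step_nonneg
      reshuffle_step_commute[OF assms(1)] in auto)
  ultimately show ?thesis by blast
qed

end
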